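(* Let $0<k<n$. Suppose that $M(\pi_{k,n})$ contains a non-saturated subset. Then $M(\pi_{k,n+k})$ contains a non-saturated subset.
   Context: For integers $0<k<n$: $\varepsilon_1,\dots,\varepsilon_n$ is the standard basis of $\mathbb Q^n$, $e_i=\varepsilon_i-\frac1n(1,\dots,1)\in\mathbb Q^n$ (so $e_1+\dots+e_n=0$), and $M(\pi_{k,n})=\{e_{i_1}+\dots+e_{i_k}\mid 1\le i_1<\dots<i_k\le n\}$ (the set of $T$-weights of $\Lambda^k\Bbbk^n$ for $SL(n)$). A finite set $\{v_1,\dots,v_m\}$ is saturated if $\mathbb Z_+(v_1,\dots,v_m)=\mathbb Z(v_1,\dots,v_m)\cap\mathbb Q_+(v_1,\dots,v_m)$ (combinations with non-negative integer, integer, non-negative rational coefficients respectively); otherwise it is non-saturated. *)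

theory Defs
  imports Complex_Main
begin

text \<open>Vectors of Q^n are modelled as functions nat => rat, coordinates 0..n-1
  (zero outside). Basis indices are 0-based.\<close>

type_synonym qvec = "nat \<Rightarrow> rat"

definition eps :: "nat \<Rightarrow> nat \<Rightarrow> qvec" where
  "eps n i = (\<lambda>j. if j < n \<and> j = i then 1 else 0)"

definition evec :: "nat \<Rightarrow> nat \<Rightarrow> qvec" where
  "evec n i = (\<lambda>j. eps n i j - (if j < n then 1 / of_nat n else 0))"

definition Mpi :: "nat \<Rightarrow> nat \<Rightarrow> qvec set" where
  "Mpi k n = {(\<lambda>j. \<Sum>i\<in>S. evec n i j) | S. S \<subseteq> {0..<n} \<and> card S = k}"

definition nonneg_int_span :: "qvec set \<Rightarrow> qvec set" where
  "nonneg_int_span V = {(\<lambda>j. \<Sum>v\<in>V. of_nat (c v) * v j) | c :: qvec \<Rightarrow> nat. True}"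

definition int_span :: "qvec set \<Rightarrow> qvec set" where
  "int_span V = {(\<lambda>j. \<Sum>v\<in>V. of_int (c v) * v j) | c :: qvec \<Rightarrow> int. True}"

definition nonneg_rat_span :: "qvec set \<Rightarrow> qvec set" where
  "nonneg_rat_span V = {(\<lambda>j. \<Sum>v\<in>V. c v * v j) | c :: qvec \<Rightarrow> rat. \<forall>v\<in>V. c v \<ge> 0}"

definition saturated :: "qvec set \<Rightarrow> bool" where
  "saturated V \<longleftrightarrow> nonneg_int_span V = int_span V \<inter> nonneg_rat_span V"

end

theory Submission imports Defs begin

(* Let w be the weight of the last k basis vectors of Q^(n+k), i.e. the
   element of M(pi_{k,n+k}) indexed by {n, ..., n+k-1}.  Regarding Q^n as a subspace of
   Q^(n+k) (extension by zero), every v in M(pi_{k,n}) satisfies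
     v - (k/n) w  \<in>  M(pi_{k,n+k}),
   so a subset V of M(pi_{k,n}) yields the subset  {w} \<union> {v - (k/n) w | v \<in> V}
   of M(pi_{k,n+k}).  The theorem is thus an instance of a general fact, proved first:
     if every vector of a finite set V vanishes at a coordinate i where w does not
     ("w is transverse to V"), then shearing V along w and adjoining w preserves
     non-saturation.
   A combination of the new set is (a combination of V) + beta * w, with beta read off
   at the coordinate i; so a witness y of non-saturation of V lifts to a witness
   y + beta * w, the integer coefficient of w being chosen large enough to keep the
   rational coefficients non-negative. *)

section \<open>Saturation and shearing\<close>

lemma nonneg_int_span_subset: "nonneg_int_span V \<subseteq> int_span V \<inter> nonneg_rat_span V"
proof
  fix x assume "x \<in> nonneg_int_span V"
  then obtain c where c: "x = (\<lambda>j. \<Sum>v\<in>V. of_nat (c v) * v j)"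
    unfolding nonneg_int_span_def by auto
  have "x \<in> int_span V" unfolding int_span_def c
    by (rule CollectI, rule exI[where x="\<lambda>v. int (c v)"]) simp
  moreover have "x \<in> nonneg_rat_span V" unfolding nonneg_rat_span_def c
    by (rule CollectI, rule exI[where x="\<lambda>v. of_nat (c v)"]) simp
  ultimately show "x \<in> int_span V \<inter> nonneg_rat_span V" by simp
qed

lemma not_saturated_iff:
  "\<not> saturated V \<longleftrightarrow> (\<exists>y\<in>int_span V \<inter> nonneg_rat_span V. y \<notin> nonneg_int_span V)"
  using nonneg_int_span_subset[of V] unfolding saturated_def by blast

definition shear :: "rat \<Rightarrow> qvec \<Rightarrow> qvec \<Rightarrow> qvec" where
  "shear t w v = (\<lambda>j. v j + t * w j)"

lemma shear_apply: "shear t w v j = v j + t * w j"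
  unfolding shear_def ..

lemma shear_eq_iff: "shear t w v = shear t w v' \<longleftrightarrow> v = v'"
  unfolding shear_def fun_eq_iff by simp

lemma shear_ne_transverse:
  assumes "v i = 0" and "w i \<noteq> 0" and "t \<noteq> 1"
  shows "shear t w v \<noteq> w"
proof
  assume "shear t w v = w"
  then have "shear t w v i = w i" by (rule fun_cong)
  with assms show False by (simp add: shear_def)
qed

lemma sum_sheared_set:
  fixes V :: "qvec set" and a :: "qvec \<Rightarrow> rat"
  assumes "finite V" and "\<forall>v\<in>V. v i = 0" and "w i \<noteq> 0" and "t \<noteq> 1"
  shows "(\<Sum>u\<in>insert w (shear t w ` V). a u * u j) =
    (\<Sum>v\<in>V. a (shear t w v) * v j) + (a w + t * (\<Sum>v\<in>V. a (shear t w v))) * w j"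
proof -
  have inj: "inj_on (shear t w) V" by (rule inj_onI) (simp add: shear_eq_iff)
  have "shear t w v \<noteq> w" if "v \<in> V" for v
    using that assms(2-4) by (intro shear_ne_transverse) auto
  then have w_fresh: "w \<notin> shear t w ` V" by (metis imageE)
  have reindex: "(\<Sum>u\<in>insert w (shear t w ` V). a u * u j) =
      a w * w j + (\<Sum>v\<in>V. a (shear t w v) * shear t w v j)"
    using assms(1) inj w_fresh by (simp add: sum.reindex)
  have split: "(\<Sum>v\<in>V. a (shear t w v) * shear t w v j)
      = (\<Sum>v\<in>V. a (shear t w v) * v j) + (t * w j) * (\<Sum>v\<in>V. a (shear t w v))"
    by (simp add: shear_apply distrib_left sum.distrib sum_distrib_left mult_ac)
  show ?thesis unfolding reindex split by (simp only: algebra_simps)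
qed

text \<open>The V-part of a combination of V and a transverse vector w is determined by the
  combination, since the coefficient of w can be read off at the coordinate i.\<close>
lemma transverse_combination_unique:
  fixes V :: "qvec set" and w :: qvec and c c' :: "qvec \<Rightarrow> rat"
  assumes "\<forall>v\<in>V. v i = 0" and "w i \<noteq> 0"
    and eq: "(\<lambda>j. (\<Sum>v\<in>V. c v * v j) + \<beta> * w j) = (\<lambda>j. (\<Sum>v\<in>V. c' v * v j) + \<beta>' * w j)"
  shows "(\<lambda>j. \<Sum>v\<in>V. c v * v j) = (\<lambda>j. \<Sum>v\<in>V. c' v * v j)"
proof -
  have "(\<Sum>v\<in>V. c v * v i) = 0" "(\<Sum>v\<in>V. c' v * v i) = 0"
    using assms(1) by (auto intro!: sum.neutral)
  then have "\<beta> * w i = \<beta>' * w i" using fun_cong[OF eq, of i] by simp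
  then have "\<beta> = \<beta>'" using assms(2) by simp
  then show ?thesis using eq by (simp add: fun_eq_iff)
qed

lemma shear_coefficients:
  fixes c :: "qvec \<Rightarrow> 'a"
  assumes "\<forall>v\<in>V. v i = 0" and "w i \<noteq> 0" and "t \<noteq> 1"
  obtains d where "d w = b" and "\<And>v. v \<in> V \<Longrightarrow> d (shear t w v) = c v"
proof -
  define d where "d u = (if u = w then b else c (THE v. u = shear t w v))" for u
  have "d w = b" unfolding d_def by simp
  moreover have "d (shear t w v) = c v" if "v \<in> V" for v
  proof -
    have "shear t w v \<noteq> w" using assms that by (intro shear_ne_transverse) auto
    moreover have "(THE v'. shear t w v = shear t w v') = v"
      by (rule the_equality) (auto simp: shear_eq_iff)
    ultimately show ?thesis unfolding d_def by simp
  qed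
  ultimately show thesis by (rule that)
qed

lemma nonneg_int_span_shear_restrict:
  fixes V :: "qvec set" and w :: qvec
  assumes fin: "finite V" and van: "\<forall>v\<in>V. v i = 0" and w0: "w i \<noteq> 0" and t: "t \<noteq> 1"
    and "(\<lambda>j. (\<Sum>v\<in>V. c v * v j) + \<beta> * w j) \<in> nonneg_int_span (insert w (shear t w ` V))"
  shows "(\<lambda>j. \<Sum>v\<in>V. c v * v j) \<in> nonneg_int_span V"
proof -
  obtain p where p: "(\<lambda>j. (\<Sum>v\<in>V. c v * v j) + \<beta> * w j)
      = (\<lambda>j. \<Sum>u\<in>insert w (shear t w ` V). of_nat (p u) * u j)"
    using assms(5) unfolding nonneg_int_span_def by auto
  then have "(\<lambda>j. (\<Sum>v\<in>V. of_nat (p (shear t w v)) * v j)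
              + (of_nat (p w) + t * (\<Sum>v\<in>V. of_nat (p (shear t w v)))) * w j)
      = (\<lambda>j. (\<Sum>v\<in>V. c v * v j) + \<beta> * w j)"
    unfolding sum_sheared_set[where i=i and w=w, OF fin van w0 t] by simp
  then have "(\<lambda>j. \<Sum>v\<in>V. of_nat (p (shear t w v)) * v j) = (\<lambda>j. \<Sum>v\<in>V. c v * v j)"
    by (rule transverse_combination_unique[where i=i and w=w, OF van w0])
  then show ?thesis unfolding nonneg_int_span_def
    by (intro CollectI exI[where x="\<lambda>v. p (shear t w v)"] conjI TrueI) (rule sym)
qed

text \<open>A witness y of non-saturation of V lifts to y + beta w,
  where the integer coefficient m of w is taken large enough for the rational
  coefficient r of w to be non-negative.\<close>
lemma not_saturated_shear:
  fixes V :: "qvec set" and w :: qvec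
  assumes fin: "finite V" and van: "\<forall>v\<in>V. v i = 0" and w0: "w i \<noteq> 0" and t: "t \<noteq> 1"
    and "\<not> saturated V"
  shows "\<not> saturated (insert w (shear t w ` V))"
proof -
  let ?V' = "insert w (shear t w ` V)"
  have lift: "(\<Sum>u\<in>?V'. a u * u j) =
      (\<Sum>v\<in>V. a (shear t w v) * v j) + (a w + t * (\<Sum>v\<in>V. a (shear t w v))) * w j"
    for a j by (rule sum_sheared_set[where i=i and w=w, OF fin van w0 t])
  obtain y where y: "y \<in> int_span V" "y \<in> nonneg_rat_span V" "y \<notin> nonneg_int_span V"
    using \<open>\<not> saturated V\<close> unfolding not_saturated_iff by blast
  obtain zc where zc: "y = (\<lambda>j. \<Sum>v\<in>V. of_int (zc v) * v j)"
    using y(1) unfolding int_span_def by auto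
  obtain qc where qc: "y = (\<lambda>j. \<Sum>v\<in>V. qc v * v j)" "\<forall>v\<in>V. qc v \<ge> 0"
    using y(2) unfolding nonneg_rat_span_def by auto
  define Z :: rat where "Z = (\<Sum>v\<in>V. of_int (zc v))"
  define Q where "Q = (\<Sum>v\<in>V. qc v)"
  obtain m :: nat where m: "t * (Q - Z) < of_nat m" using reals_Archimedean2 by blast
  define r where "r = of_nat m - t * (Q - Z)"
  have r0: "r \<ge> 0" using m unfolding r_def by simp
  obtain zc' where zc': "zc' w = int m" "\<And>v. v \<in> V \<Longrightarrow> zc' (shear t w v) = zc v"
    using shear_coefficients[where i=i and w=w, OF van w0 t] by metis
  obtain qc' where qc': "qc' w = r" "\<And>v. v \<in> V \<Longrightarrow> qc' (shear t w v) = qc v"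
    using shear_coefficients[where i=i and w=w, OF van w0 t] by metis
  define x where "x = (\<lambda>j. y j + (of_nat m + t * Z) * w j)"
  have x_int: "x = (\<lambda>j. \<Sum>u\<in>?V'. of_int (zc' u) * u j)"
  proof
    fix j
    have "(\<Sum>v\<in>V. of_int (zc' (shear t w v)) * v j) = (\<Sum>v\<in>V. of_int (zc v) * v j)"
      "(\<Sum>v\<in>V. of_int (zc' (shear t w v))) = Z"
      unfolding Z_def by (intro sum.cong refl; simp add: zc'(2))+
    then show "x j = (\<Sum>u\<in>?V'. of_int (zc' u) * u j)"
      unfolding lift[of "\<lambda>u. of_int (zc' u)" j] x_def zc zc'(1) by simp
  qed
  have x_rat: "x = (\<lambda>j. \<Sum>u\<in>?V'. qc' u * u j)"
  proof
    fix j
    have "(\<Sum>v\<in>V. qc' (shear t w v) * v j) = (\<Sum>v\<in>V. qc v * v j)"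
      "(\<Sum>v\<in>V. qc' (shear t w v)) = Q"
      unfolding Q_def by (intro sum.cong refl; simp add: qc'(2))+
    then show "x j = (\<Sum>u\<in>?V'. qc' u * u j)"
      unfolding lift[of qc' j] x_def qc(1) qc'(1) r_def by (simp add: algebra_simps)
  qed
  have "x \<in> int_span ?V'"
    unfolding x_int int_span_def by (intro CollectI exI[where x=zc'] conjI refl TrueI)
  moreover have "x \<in> nonneg_rat_span ?V'"
  proof -
    have "\<forall>u\<in>?V'. qc' u \<ge> 0" using r0 qc(2) qc' by auto
    then show ?thesis
      unfolding x_rat nonneg_rat_span_def by (intro CollectI exI[where x=qc'] conjI refl)
  qed
  moreover have "x \<notin> nonneg_int_span ?V'"
  proof
    assume "x \<in> nonneg_int_span ?V'"
    then have "y \<in> nonneg_int_span V"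
      unfolding x_def zc by (rule nonneg_int_span_shear_restrict[where i=i and w=w, OF fin van w0 t])
    with y(3) show False ..
  qed
  ultimately show ?thesis unfolding not_saturated_iff by (intro bexI[where x=x]) simp_all
qed

section \<open>The weights of the exterior powers\<close>

lemma sum_evec:
  assumes "S \<subseteq> {0..<N}"
  shows "(\<Sum>i\<in>S. evec N i j) =
    (if j \<in> S then 1 else 0) - (if j < N then of_nat (card S) / of_nat N else 0)"
proof -
  have "(\<Sum>i\<in>S. eps N i j) = (if j \<in> S then 1 else 0)"
    using assms finite_subset[OF assms] unfolding eps_def
    by (auto simp: sum.delta' intro!: sum.neutral)
  then show ?thesis unfolding evec_def by (simp add: sum_subtractf)
qed

lemma finite_Mpi: "finite (Mpi k n)"
proof -
  have "Mpi k n \<subseteq> (\<lambda>S. (\<lambda>j. \<Sum>i\<in>S. evec n i j)) ` Pow {0..<n}"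
    unfolding Mpi_def by auto
  then show ?thesis by (rule finite_subset) simp
qed

lemma Mpi_vanish: "v \<in> Mpi k n \<Longrightarrow> n \<le> j \<Longrightarrow> v j = 0"
  unfolding Mpi_def using sum_evec by fastforce

definition last_block :: "nat \<Rightarrow> nat \<Rightarrow> qvec" where
  "last_block k n = (\<lambda>j. \<Sum>i\<in>{n..<n+k}. evec (n+k) i j)"

lemma last_block_Mpi: "last_block k n \<in> Mpi k (n + k)"
  unfolding Mpi_def last_block_def by fastforce

lemma last_block_apply:
  "last_block k n j = (if n \<le> j \<and> j < n + k then 1 else 0)
     - (if j < n + k then of_nat k / of_nat (n + k) else 0)"
  unfolding last_block_def by (subst sum_evec) auto

lemma last_block_nonzero: "0 < n \<Longrightarrow> 0 < k \<Longrightarrow> last_block k n n \<noteq> 0"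
  by (simp add: last_block_apply field_simps)

text \<open>The arithmetic behind the embedding: (k/n) (1 - k/(n+k)) = k/(n+k).\<close>
lemma shear_factor_identity:
  fixes K N :: rat assumes "0 < N" and "0 \<le> K"
  shows "K / N * (1 - K / (N + K)) = K / (N + K)"
  using assms by (simp add: field_simps)

text \<open>The embedding of M(pi_{k,n}) into M(pi_{k,n+k}): shearing by -(k/n) times the last
  block weight turns the weight of S in Q^n into the weight of S in Q^(n+k).\<close>
lemma shear_Mpi:
  assumes "v \<in> Mpi k n" and "0 < n"
  shows "shear (- (of_nat k / of_nat n)) (last_block k n) v \<in> Mpi k (n + k)"
proof -
  obtain S where S: "S \<subseteq> {0..<n}" "card S = k" "v = (\<lambda>j. \<Sum>i\<in>S. evec n i j)"
    using assms(1) unfolding Mpi_def by auto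
  have S': "S \<subseteq> {0..<n+k}" using S(1) by auto
  define c :: rat where "c = of_nat k / of_nat n"
  define x :: rat where "x = of_nat k / of_nat (n + k)"
  have factor: "c * (1 - x) = x"
    unfolding c_def x_def of_nat_add using assms(2) by (intro shear_factor_identity) auto
  have "shear (- c) (last_block k n) v j = (\<Sum>i\<in>S. evec (n+k) i j)" for j
  proof -
    have lhs: "shear (- c) (last_block k n) v j =
        (if j \<in> S then 1 else 0) - (if j < n then c else 0)
        - c * ((if n \<le> j \<and> j < n + k then 1 else 0) - (if j < n + k then x else 0))"
      unfolding shear_apply last_block_apply S(3) sum_evec[OF S(1)] S(2) c_def x_def by simp
    have rhs: "(\<Sum>i\<in>S. evec (n+k) i j) = (if j \<in> S then 1 else 0) - (if j < n + k then x else 0)"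
      unfolding sum_evec[OF S'] S(2) x_def ..
    consider "j < n" | "n \<le> j" "j < n + k" | "n + k \<le> j" by linarith
    then show ?thesis
    proof cases
      case 1
      then show ?thesis unfolding lhs rhs using factor by (simp add: algebra_simps)
    next
      case 2
      then have "j \<notin> S" using S(1) by auto
      with 2 show ?thesis unfolding lhs rhs using factor by (simp add: algebra_simps)
    next
      case 3
      then have "j \<notin> S" using S(1) by auto
      with 3 show ?thesis unfolding lhs rhs by simp
    qed
  qed
  then show ?thesis unfolding Mpi_def c_def using S' S(2) by (blast intro: ext)
qed

theorem lemma5:
  fixes k n :: nat
  assumes "0 < k" and "k < n"
    and "\<exists>V. V \<subseteq> Mpi k n \<and> \<not> saturated V"
  shows "\<exists>V. V \<subseteq> Mpi k (n + k) \<and> \<not> saturated V"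
proof -
  obtain V where V: "V \<subseteq> Mpi k n" "\<not> saturated V" using assms(3) by blast
  have n: "0 < n" using assms(1,2) by simp
  let ?t = "- (of_nat k / of_nat n) :: rat"
  let ?w = "last_block k n"
  have "0 < (of_nat k / of_nat n :: rat)" using assms(1) n by simp
  then have "?t \<noteq> 1" by linarith
  moreover have "\<forall>v\<in>V. v n = 0" using V(1) Mpi_vanish by blast
  moreover have "finite V" using V(1) finite_Mpi by (rule finite_subset)
  ultimately have "\<not> saturated (insert ?w (shear ?t ?w ` V))"
    using not_saturated_shear[where i=n and w="?w"] last_block_nonzero[OF n assms(1)] V(2)
    by blast
  moreover have "insert ?w (shear ?t ?w ` V) \<subseteq> Mpi k (n + k)"
    using last_block_Mpi shear_Mpi[OF _ n] V(1) by blast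
  ultimately show ?thesis by blast
qed

end
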